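(* Let $\mu\in\mathbb{R}$ and $\alpha>0$, and define $\gamma_{\mu,\alpha}:(-\infty,-2|\mu|]\cup[2|\mu|,\infty)\to\mathbb{R}$ by letting $\gamma_{\mu,\alpha}(y)$ be the unique $x\in\mathbb{R}$ with $x=\mu\log|x+iy|-\log\alpha$. Then: (i) $\gamma_{\mu,\alpha}$ is continuously differentiable; (ii) if $\mu>0$ then $\gamma_{\mu,\alpha}(y)\to\infty$ as $|y|\to\infty$; if $\mu<0$ then $\gamma_{\mu,\alpha}(y)\to-\infty$ as $|y|\to\infty$; if $\mu=0$ then $\gamma_{\mu,\alpha}\equiv-\log\alpha$; (iii) $|\gamma_{\mu,\alpha}'(y)|\le2|\mu|/|y|$; in particular $\gamma_{\mu,\alpha}'(y)\to0$ as $|y|\to\infty$ uniformly in $\alpha$; (iv) for $\alpha>\beta>0$ and all $y$ in the domain, $$\tfrac23\log\tfrac{\alpha}{\beta}\le\gamma_{\mu,\beta}(y)-\gamma_{\mu,\alpha}(y)\le2\log\tfrac{\alpha}{\beta},\qquad \lim_{|y|\to\infty}(\gamma_{\mu,\beta}(y)-\gamma_{\mu,\alpha}(y))=\log\tfrac{\alpha}{\beta}.$$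
   Context: For $|y|\ge2|\mu|$ there is indeed a unique $x$ with $x=\mu\log|x+iy|-\log\alpha$. *)

theory Defs
  imports "HOL-Analysis.Analysis"
begin

definition gdom :: "real \<Rightarrow> real set" where
  "gdom \<mu> = {y. \<bar>y\<bar> \<ge> 2 * \<bar>\<mu>\<bar>}"

definition gam :: "real \<Rightarrow> real \<Rightarrow> real \<Rightarrow> real" where
  "gam \<mu> \<alpha> y = (THE x. x = \<mu> * ln (cmod (Complex x y)) - ln \<alpha>)"

end

theory Submission
  imports Defs
begin

(* For |y| > |mu| the map x |-> mu log|x + iy| - log alpha is a contraction of the real line:
   d/dx log|x + iy| = x / (x^2 + y^2) is bounded by 1 / (2|y|), so its Lipschitz constant
   |mu| / (2|y|) is below 1/2. Banach's fixed point theorem makes gamma well defined, and a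
   contraction depending continuously on a parameter has a continuously varying fixed point.
   Solving the defining equation for |y| exhibits gamma as a local inverse of an explicit
   smooth function; this gives gamma' = mu y / (gamma^2 + y^2 - mu gamma), whose denominator is
   at least y^2 / 2. For two parameters the difference d = gamma_beta - gamma_alpha satisfies
   d - log (alpha / beta) = mu (log|gamma_beta + iy| - log|gamma_alpha + iy|), so the same
   contraction estimate gives |d - log (alpha / beta)| <= |d| / 2 and an error that vanishes
   as |y| grows. *)

lemma ln_cmod_Complex: "ln (cmod (Complex x y)) = ln (x\<^sup>2 + y\<^sup>2) / 2"
proof (cases "x\<^sup>2 + y\<^sup>2 = 0")
  case False
  then have "0 < x\<^sup>2 + y\<^sup>2" by (simp add: add_pos_nonneg order_less_le)
  then show ?thesis by (simp add: norm_complex_def ln_sqrt)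
qed (simp add: norm_complex_def)

lemma abs_mult_le_half_sum_squares: "\<bar>x * y\<bar> \<le> ((x::real)\<^sup>2 + y\<^sup>2) / 2"
  using sum_squares_bound[of "\<bar>x\<bar>" "\<bar>y\<bar>"] by (simp add: abs_mult)

lemma ln_cmod_Complex_lipschitz:
  assumes "y \<noteq> 0"
  shows "\<bar>ln (cmod (Complex b y)) - ln (cmod (Complex a y))\<bar> \<le> \<bar>b - a\<bar> / (2 * \<bar>y\<bar>)"
proof -
  have pos: "0 < t\<^sup>2 + y\<^sup>2" for t
    using assms by (simp add: sum_power2_gt_zero_iff)
  have "((\<lambda>t. ln (t\<^sup>2 + y\<^sup>2) / 2) has_field_derivative t / (t\<^sup>2 + y\<^sup>2)) (at t within UNIV)" for t
    using pos[of t] by (auto intro!: derivative_eq_intros simp: divide_simps)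
  moreover have "norm (t / (t\<^sup>2 + y\<^sup>2)) \<le> 1 / (2 * \<bar>y\<bar>)" for t
    using abs_mult_le_half_sum_squares[of t y] pos[of t] assms
    by (simp add: field_simps abs_mult)
  ultimately have "norm (ln (b\<^sup>2 + y\<^sup>2) / 2 - ln (a\<^sup>2 + y\<^sup>2) / 2) \<le> 1 / (2 * \<bar>y\<bar>) * norm (b - a)"
    by (intro field_differentiable_bound[of UNIV]) auto
  then show ?thesis
    by (simp add: ln_cmod_Complex)
qed

lemma mult_ln_cmod_Complex_lipschitz:
  assumes "\<mu> = 0 \<or> y \<noteq> 0"
  shows "\<bar>\<mu> * ln (cmod (Complex b y)) - \<mu> * ln (cmod (Complex a y))\<bar>
           \<le> \<bar>\<mu>\<bar> / (2 * \<bar>y\<bar>) * \<bar>b - a\<bar>"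
proof (cases "\<mu> = 0")
  case False
  then have "\<bar>\<mu>\<bar> * \<bar>ln (cmod (Complex b y)) - ln (cmod (Complex a y))\<bar> \<le> \<bar>\<mu>\<bar> * (\<bar>b - a\<bar> / (2 * \<bar>y\<bar>))"
    using assms by (intro mult_left_mono ln_cmod_Complex_lipschitz) auto
  then show ?thesis
    by (simp add: abs_mult right_diff_distrib[symmetric])
qed simp

lemma contraction_factor_less_half:
  fixes \<mu> y :: real
  assumes "\<mu> = 0 \<or> \<bar>\<mu>\<bar> < \<bar>y\<bar>"
  shows "\<bar>\<mu>\<bar> / (2 * \<bar>y\<bar>) < 1 / 2"
  using assms by (auto simp: field_simps)

lemma ex1_gam_equation:
  assumes "\<mu> = 0 \<or> \<bar>\<mu>\<bar> < \<bar>y\<bar>"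
  shows "\<exists>!x. x = \<mu> * ln (cmod (Complex x y)) - c"
proof -
  have "\<mu> = 0 \<or> y \<noteq> 0"
    using assms by auto
  have "\<exists>!x. \<mu> * ln (cmod (Complex x y)) - c = x"
  proof (rule banach_fix_type)
    show "\<bar>\<mu>\<bar> / (2 * \<bar>y\<bar>) < 1"
      using contraction_factor_less_half[OF assms] by simp
    show "\<forall>a b. dist (\<mu> * ln (cmod (Complex a y)) - c) (\<mu> * ln (cmod (Complex b y)) - c)
                 \<le> \<bar>\<mu>\<bar> / (2 * \<bar>y\<bar>) * dist a b"
      using mult_ln_cmod_Complex_lipschitz[OF \<open>\<mu> = 0 \<or> y \<noteq> 0\<close>] by (simp add: dist_real_def)
  qed simp
  then show ?thesis
    by metis
qed

lemma gam_equation: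
  assumes "\<mu> = 0 \<or> \<bar>\<mu>\<bar> < \<bar>y\<bar>"
  shows "gam \<mu> \<alpha> y = \<mu> * ln (cmod (Complex (gam \<mu> \<alpha> y) y)) - ln \<alpha>"
  unfolding gam_def by (rule theI'[OF ex1_gam_equation[OF assms]])

lemma gam_zero: "gam 0 \<alpha> y = - ln \<alpha>"
  by (simp add: gam_def)

lemma gam_minus: "gam \<mu> \<alpha> (- y) = gam \<mu> \<alpha> y"
  by (simp add: gam_def norm_complex_def)

lemma isCont_contraction_fixpoint:
  fixes \<Phi> :: "'a::t2_space \<Rightarrow> 'b::metric_space \<Rightarrow> 'b"
  assumes contraction: "\<forall>\<^sub>F z in at y. \<forall>a b. dist (\<Phi> z a) (\<Phi> z b) \<le> k * dist a b"
    and "k < 1"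
    and fixpoint: "\<forall>\<^sub>F z in at y. g z = \<Phi> z (g z)" "g y = \<Phi> y (g y)"
    and cont: "isCont (\<lambda>z. \<Phi> z (g y)) y"
  shows "isCont g y"
proof -
  have "\<forall>\<^sub>F z in at y. norm (dist (g z) (g y)) \<le> dist (\<Phi> z (g y)) (\<Phi> y (g y)) / (1 - k)"
    using contraction fixpoint(1)
  proof eventually_elim
    case (elim z)
    have "dist (g z) (g y) \<le> dist (\<Phi> z (g z)) (\<Phi> z (g y)) + dist (\<Phi> z (g y)) (\<Phi> y (g y))"
      using dist_triangle[of "g z" "g y" "\<Phi> z (g y)"] elim(2) fixpoint(2) by simp
    also have "\<dots> \<le> k * dist (g z) (g y) + dist (\<Phi> z (g y)) (\<Phi> y (g y))"
      using elim(1) by simp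
    finally show ?case
      using \<open>k < 1\<close> by (simp add: field_simps)
  qed
  moreover have "((\<lambda>z. dist (\<Phi> z (g y)) (\<Phi> y (g y)) / (1 - k)) \<longlongrightarrow> 0) (at y)"
    using cont unfolding isCont_def by (intro tendsto_divide_zero tendsto_dist_iff[THEN iffD1])
  ultimately have "((\<lambda>z. dist (g z) (g y)) \<longlongrightarrow> 0) (at y)"
    by (rule Lim_null_comparison)
  then show ?thesis
    unfolding isCont_def by (rule tendsto_dist_iff[THEN iffD2])
qed

lemma isCont_gam:
  assumes "\<bar>\<mu>\<bar> < \<bar>y\<bar>"
  shows "isCont (gam \<mu> \<alpha>) y"
proof (rule isCont_contraction_fixpoint)
  have near: "\<forall>\<^sub>F z in at y. \<bar>\<mu>\<bar> < \<bar>z\<bar>"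
    using order_tendstoD(1)[OF tendsto_rabs[OF tendsto_ident_at] assms] .
  then show "\<forall>\<^sub>F z in at y. \<forall>a b. dist (\<mu> * ln (cmod (Complex a z)) - ln \<alpha>) (\<mu> * ln (cmod (Complex b z)) - ln \<alpha>)
                                \<le> 1 / 2 * dist a b"
  proof eventually_elim
    case (elim z)
    show ?case
    proof (intro allI)
      fix a b :: real
      have "\<bar>\<mu> * ln (cmod (Complex a z)) - \<mu> * ln (cmod (Complex b z))\<bar> \<le> \<bar>\<mu>\<bar> / (2 * \<bar>z\<bar>) * \<bar>a - b\<bar>"
        using elim by (intro mult_ln_cmod_Complex_lipschitz) auto
      also have "\<dots> \<le> 1 / 2 * \<bar>a - b\<bar>"
        using contraction_factor_less_half[of \<mu> z] elim by (intro mult_right_mono) auto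
      finally show "dist (\<mu> * ln (cmod (Complex a z)) - ln \<alpha>) (\<mu> * ln (cmod (Complex b z)) - ln \<alpha>)
                      \<le> 1 / 2 * dist a b"
        by (simp add: dist_real_def)
    qed
  qed
  show "\<forall>\<^sub>F z in at y. gam \<mu> \<alpha> z = \<mu> * ln (cmod (Complex (gam \<mu> \<alpha> z) z)) - ln \<alpha>"
    using near by eventually_elim (rule gam_equation, simp)
  show "gam \<mu> \<alpha> y = \<mu> * ln (cmod (Complex (gam \<mu> \<alpha> y) y)) - ln \<alpha>"
    using assms by (intro gam_equation) simp
  show "isCont (\<lambda>z. \<mu> * ln (cmod (Complex (gam \<mu> \<alpha> y) z)) - ln \<alpha>) y"
    unfolding ln_cmod_Complex using assms
    by (auto intro!: continuous_intros simp: sum_power2_gt_zero_iff)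
qed simp

lemma half_square_le_sum_squares_minus_mult:
  fixes \<mu> x y :: real
  assumes "\<bar>\<mu>\<bar> \<le> \<bar>y\<bar>"
  shows "y\<^sup>2 / 2 \<le> x\<^sup>2 + y\<^sup>2 - \<mu> * x"
proof -
  have "\<mu> * x \<le> \<bar>y\<bar> * \<bar>x\<bar>"
    using assms by (metis abs_ge_self abs_ge_zero abs_mult mult_right_mono order_trans)
  also have "\<dots> \<le> x\<^sup>2 / 2 + y\<^sup>2 / 2"
    using abs_mult_le_half_sum_squares[of x y] by (simp add: abs_mult mult.commute)
  finally show ?thesis
    using zero_le_power2[of x] by linarith
qed

lemma sum_squares_minus_mult_pos:
  fixes \<mu> x y :: real
  assumes "\<bar>\<mu>\<bar> \<le> \<bar>y\<bar>" "y \<noteq> 0"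
  shows "0 < x\<^sup>2 + y\<^sup>2 - \<mu> * x"
proof -
  have "0 < y\<^sup>2 / 2"
    using assms(2) by simp
  also have "\<dots> \<le> x\<^sup>2 + y\<^sup>2 - \<mu> * x"
    by (rule half_square_le_sum_squares_minus_mult[OF assms(1)])
  finally show ?thesis .
qed

text \<open>Implicit differentiation of \<open>x = \<mu>/2 \<cdot> ln (x\<^sup>2 + y\<^sup>2) - ln \<alpha>\<close> gives
  \<open>x' \<cdot> (x\<^sup>2 + y\<^sup>2 - \<mu> x) = \<mu> y\<close>.\<close>
definition gam_deriv :: "real \<Rightarrow> real \<Rightarrow> real \<Rightarrow> real" where
  "gam_deriv \<mu> \<alpha> y = \<mu> * y / ((gam \<mu> \<alpha> y)\<^sup>2 + y\<^sup>2 - \<mu> * gam \<mu> \<alpha> y)"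

lemma exp_gam_equation:
  assumes "\<mu> \<noteq> 0" "\<bar>\<mu>\<bar> < \<bar>y\<bar>"
  shows "exp (2 * (gam \<mu> \<alpha> y + ln \<alpha>) / \<mu>) = (gam \<mu> \<alpha> y)\<^sup>2 + y\<^sup>2"
proof -
  have "0 < (gam \<mu> \<alpha> y)\<^sup>2 + y\<^sup>2"
    using assms by (auto simp: sum_power2_gt_zero_iff)
  moreover have "2 * (gam \<mu> \<alpha> y + ln \<alpha>) / \<mu> = ln ((gam \<mu> \<alpha> y)\<^sup>2 + y\<^sup>2)"
    using gam_equation[of \<mu> y \<alpha>] assms by (simp add: ln_cmod_Complex field_simps)
  ultimately show ?thesis
    by simp
qed

lemma gam_has_real_derivative_pos:
  assumes "\<mu> \<noteq> 0" "\<bar>\<mu>\<bar> < y"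
  shows "(gam \<mu> \<alpha> has_real_derivative gam_deriv \<mu> \<alpha> y) (at y)"
proof -
  define x where "x = gam \<mu> \<alpha> y"
  define \<psi> where "\<psi> t = sqrt (exp (2 * (t + ln \<alpha>) / \<mu>) - t\<^sup>2)" for t
  define D where "D = (x\<^sup>2 + y\<^sup>2 - \<mu> * x) / (\<mu> * y)"
  \<comment> \<open>solving the defining equation for \<open>y > 0\<close> exhibits \<open>gam \<mu> \<alpha>\<close> as a local inverse of \<open>\<psi>\<close>\<close>
  have inverse: "\<psi> (gam \<mu> \<alpha> z) = z" if "\<bar>\<mu>\<bar> < z" for z
    using that exp_gam_equation[OF assms(1), of z] by (simp add: \<psi>_def)
  have "0 < x\<^sup>2 + y\<^sup>2 - \<mu> * x"
    using assms by (intro sum_squares_minus_mult_pos) auto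
  then have "D \<noteq> 0"
    using assms by (simp add: D_def)
  have E: "exp (2 * (x + ln \<alpha>) / \<mu>) = x\<^sup>2 + y\<^sup>2"
    using exp_gam_equation[OF assms(1), of y] assms by (simp add: x_def)
  have "(\<psi> has_real_derivative D) (at (gam \<mu> \<alpha> y))"
    unfolding \<psi>_def D_def x_def[symmetric] using E assms
    by (auto intro!: derivative_eq_intros simp: field_simps)
  then have "(gam \<mu> \<alpha> has_real_derivative inverse D) (at y)"
    by (rule DERIV_inverse_function[where a="\<bar>\<mu>\<bar>" and b="y + 1"])
       (use assms \<open>D \<noteq> 0\<close> inverse isCont_gam in auto)
  then show ?thesis
    by (simp add: gam_deriv_def D_def x_def)
qed

lemma gam_has_real_derivative:
  assumes "\<mu> = 0 \<or> \<bar>\<mu>\<bar> < \<bar>y\<bar>"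
  shows "(gam \<mu> \<alpha> has_real_derivative gam_deriv \<mu> \<alpha> y) (at y)"
proof -
  consider "\<mu> = 0" | "\<mu> \<noteq> 0" "\<bar>\<mu>\<bar> < y" | "\<mu> \<noteq> 0" "\<bar>\<mu>\<bar> < - y"
    using assms by linarith
  then show ?thesis
  proof cases
    case 1
    have "gam 0 \<alpha> = (\<lambda>_. - ln \<alpha>)"
      by (rule ext) (rule gam_zero)
    then show ?thesis
      using 1 by (simp add: gam_deriv_def)
  next
    case 2
    then show ?thesis
      by (rule gam_has_real_derivative_pos)
  next
    case 3
    have "((\<lambda>z. gam \<mu> \<alpha> (- z)) has_real_derivative gam_deriv \<mu> \<alpha> (- y) * - 1) (at y)"
      using gam_has_real_derivative_pos[OF 3]
      by (intro DERIV_chain2[where g=uminus]) (auto intro!: derivative_eq_intros)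
    then show ?thesis
      by (simp add: gam_minus gam_deriv_def)
  qed
qed

lemma abs_gam_deriv_le:
  assumes "\<bar>\<mu>\<bar> \<le> \<bar>y\<bar>" "y \<noteq> 0"
  shows "\<bar>gam_deriv \<mu> \<alpha> y\<bar> \<le> 2 * \<bar>\<mu>\<bar> / \<bar>y\<bar>"
proof -
  define x where "x = gam \<mu> \<alpha> y"
  have "0 < y\<^sup>2 / 2"
    using assms(2) by simp
  moreover have "0 < x\<^sup>2 + y\<^sup>2 - \<mu> * x"
    using assms by (rule sum_squares_minus_mult_pos)
  ultimately have "\<bar>\<mu> * y\<bar> / (x\<^sup>2 + y\<^sup>2 - \<mu> * x) \<le> \<bar>\<mu> * y\<bar> / (y\<^sup>2 / 2)"
    using half_square_le_sum_squares_minus_mult[OF assms(1), of x]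
    by (intro divide_left_mono) auto
  also have "\<dots> = 2 * \<bar>\<mu>\<bar> / \<bar>y\<bar>"
    using assms(2) by (simp add: abs_mult power2_eq_square field_simps)
  finally show ?thesis
    using \<open>0 < x\<^sup>2 + y\<^sup>2 - \<mu> * x\<close> by (simp add: gam_deriv_def x_def abs_div)
qed

lemma isCont_gam_deriv:
  assumes "\<mu> = 0 \<or> \<bar>\<mu>\<bar> < \<bar>y\<bar>"
  shows "isCont (gam_deriv \<mu> \<alpha>) y"
proof (cases "\<mu> = 0")
  case True
  then have "gam_deriv \<mu> \<alpha> = (\<lambda>_. 0)"
    by (simp add: gam_deriv_def fun_eq_iff)
  then show ?thesis
    by simp
next
  case False
  with assms have "\<bar>\<mu>\<bar> < \<bar>y\<bar>"
    by simp
  moreover from this have "0 < (gam \<mu> \<alpha> y)\<^sup>2 + y\<^sup>2 - \<mu> * gam \<mu> \<alpha> y"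
    by (intro sum_squares_minus_mult_pos) auto
  ultimately show ?thesis
    unfolding gam_deriv_def[abs_def] by (auto intro!: continuous_intros isCont_gam)
qed

lemma gam_deriv_uniformly_small:
  assumes "0 < \<epsilon>"
  shows "\<exists>R. \<forall>\<alpha> y. R \<le> \<bar>y\<bar> \<longrightarrow> \<bar>gam_deriv \<mu> \<alpha> y\<bar> < \<epsilon>"
proof (intro exI allI impI)
  fix \<alpha> y :: real
  assume y: "2 * \<bar>\<mu>\<bar> / \<epsilon> + \<bar>\<mu>\<bar> + 1 \<le> \<bar>y\<bar>"
  moreover have "0 \<le> 2 * \<bar>\<mu>\<bar> / \<epsilon>"
    using assms by simp
  ultimately have "\<bar>\<mu>\<bar> \<le> \<bar>y\<bar>" "0 < \<bar>y\<bar>" "2 * \<bar>\<mu>\<bar> / \<epsilon> < \<bar>y\<bar>"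
    by linarith+
  then have "2 * \<bar>\<mu>\<bar> / \<bar>y\<bar> < \<epsilon>"
    using assms by (simp add: divide_less_eq mult.commute)
  then show "\<bar>gam_deriv \<mu> \<alpha> y\<bar> < \<epsilon>"
    using abs_gam_deriv_le[of \<mu> y \<alpha>] \<open>\<bar>\<mu>\<bar> \<le> \<bar>y\<bar>\<close> \<open>0 < \<bar>y\<bar>\<close> by simp
qed

lemma ln_abs_le_ln_cmod_Complex:
  assumes "y \<noteq> 0"
  shows "ln \<bar>y\<bar> \<le> ln (cmod (Complex x y))"
  using assms abs_Im_le_cmod[of "Complex x y"] by (subst ln_le_cancel_iff) auto

lemma ln_abs_tendsto_at_top: "filterlim (\<lambda>y::real. ln \<bar>y\<bar>) at_top at_infinity"
  using filterlim_compose[OF ln_at_top filterlim_norm_at_top[where 'a=real]] by simp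

lemma eventually_abs_greater_at_infinity: "\<forall>\<^sub>F y in at_infinity. c < \<bar>y::real\<bar>"
  unfolding eventually_at_infinity by (auto intro!: exI[of _ "c + 1"])

lemma gam_scaled_tendsto_at_top:
  assumes "\<mu> \<noteq> 0"
  shows "filterlim (\<lambda>y. (gam \<mu> \<alpha> y + ln \<alpha>) / \<mu>) at_top at_infinity"
proof (rule filterlim_at_top_mono[OF ln_abs_tendsto_at_top])
  show "\<forall>\<^sub>F y in at_infinity. ln \<bar>y\<bar> \<le> (gam \<mu> \<alpha> y + ln \<alpha>) / \<mu>"
    using eventually_abs_greater_at_infinity[of "\<bar>\<mu>\<bar>"]
  proof eventually_elim
    case (elim y)
    then have "gam \<mu> \<alpha> y + ln \<alpha> = \<mu> * ln (cmod (Complex (gam \<mu> \<alpha> y) y))"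
      using gam_equation[of \<mu> y \<alpha>] by linarith
    then show ?case
      using assms elim ln_abs_le_ln_cmod_Complex[of y "gam \<mu> \<alpha> y"] by auto
  qed
qed

lemma gam_tendsto_at_top:
  assumes "0 < \<mu>"
  shows "filterlim (gam \<mu> \<alpha>) at_top at_infinity"
proof -
  have "filterlim (\<lambda>y. - ln \<alpha> + \<mu> * ((gam \<mu> \<alpha> y + ln \<alpha>) / \<mu>)) at_top at_infinity"
    using assms gam_scaled_tendsto_at_top[of \<mu> \<alpha>]
    by (intro filterlim_tendsto_add_at_top[OF tendsto_const]
        filterlim_tendsto_pos_mult_at_top[OF tendsto_const]) auto
  then show ?thesis
    using assms by simp
qed

lemma gam_tendsto_at_bot:
  assumes "\<mu> < 0"
  shows "filterlim (gam \<mu> \<alpha>) at_bot at_infinity"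
proof -
  have "filterlim (\<lambda>y. - ln \<alpha> + \<mu> * ((gam \<mu> \<alpha> y + ln \<alpha>) / \<mu>)) at_bot at_infinity"
    using assms gam_scaled_tendsto_at_top[of \<mu> \<alpha>]
    by (intro filterlim_tendsto_add_at_bot_iff[OF tendsto_const, THEN iffD2]
        filterlim_tendsto_neg_mult_at_bot[OF tendsto_const]) auto
  then show ?thesis
    using assms by simp
qed

lemma gam_diff_near_ln_ratio:
  assumes "0 < \<alpha>" "0 < \<beta>" "\<mu> = 0 \<or> \<bar>\<mu>\<bar> < \<bar>y\<bar>"
  shows "\<bar>gam \<mu> \<beta> y - gam \<mu> \<alpha> y - ln (\<alpha> / \<beta>)\<bar>
           \<le> \<bar>\<mu>\<bar> / (2 * \<bar>y\<bar>) * \<bar>gam \<mu> \<beta> y - gam \<mu> \<alpha> y\<bar>"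
proof -
  have "gam \<mu> \<beta> y - gam \<mu> \<alpha> y - ln (\<alpha> / \<beta>)
          = \<mu> * ln (cmod (Complex (gam \<mu> \<beta> y) y)) - \<mu> * ln (cmod (Complex (gam \<mu> \<alpha> y) y))"
    using gam_equation[OF assms(3), of \<alpha>] gam_equation[OF assms(3), of \<beta>]
      ln_divide_pos[OF assms(1,2)] by linarith
  also have "\<bar>\<dots>\<bar> \<le> \<bar>\<mu>\<bar> / (2 * \<bar>y\<bar>) * \<bar>gam \<mu> \<beta> y - gam \<mu> \<alpha> y\<bar>"
    using assms(3) by (intro mult_ln_cmod_Complex_lipschitz) auto
  finally show ?thesis .
qed

lemma gam_diff_bounds:
  assumes "\<beta> < \<alpha>" "0 < \<beta>" "\<mu> = 0 \<or> \<bar>\<mu>\<bar> < \<bar>y\<bar>"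
  shows "2/3 * ln (\<alpha> / \<beta>) \<le> gam \<mu> \<beta> y - gam \<mu> \<alpha> y \<and> gam \<mu> \<beta> y - gam \<mu> \<alpha> y \<le> 2 * ln (\<alpha> / \<beta>)"
proof -
  define d where "d = gam \<mu> \<beta> y - gam \<mu> \<alpha> y"
  have "\<bar>d - ln (\<alpha> / \<beta>)\<bar> \<le> \<bar>\<mu>\<bar> / (2 * \<bar>y\<bar>) * \<bar>d\<bar>"
    using gam_diff_near_ln_ratio[OF _ assms(2,3), of \<alpha>] assms(1,2) by (simp add: d_def)
  also have "\<dots> \<le> 1 / 2 * \<bar>d\<bar>"
    using contraction_factor_less_half[OF assms(3)] by (intro mult_right_mono) auto
  finally have "\<bar>d - ln (\<alpha> / \<beta>)\<bar> \<le> \<bar>d\<bar> / 2"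
    by simp
  moreover have "0 < ln (\<alpha> / \<beta>)"
    using assms(1,2) by simp
  ultimately show ?thesis
    unfolding d_def[symmetric] by linarith
qed

lemma gam_diff_tendsto:
  assumes "\<beta> < \<alpha>" "0 < \<beta>"
  shows "((\<lambda>y. gam \<mu> \<beta> y - gam \<mu> \<alpha> y) \<longlongrightarrow> ln (\<alpha> / \<beta>)) at_infinity"
proof -
  define L where "L = ln (\<alpha> / \<beta>)"
  have "\<forall>\<^sub>F y in at_infinity. norm (gam \<mu> \<beta> y - gam \<mu> \<alpha> y - L) \<le> \<bar>\<mu> * L / y\<bar>"
    using eventually_abs_greater_at_infinity[of "\<bar>\<mu>\<bar>"]
  proof eventually_elim
    case (elim y)
    then have "\<mu> = 0 \<or> \<bar>\<mu>\<bar> < \<bar>y\<bar>" "y \<noteq> 0"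
      by auto
    have "\<bar>gam \<mu> \<beta> y - gam \<mu> \<alpha> y - L\<bar> \<le> \<bar>\<mu>\<bar> / (2 * \<bar>y\<bar>) * \<bar>gam \<mu> \<beta> y - gam \<mu> \<alpha> y\<bar>"
      using gam_diff_near_ln_ratio[OF _ assms(2) \<open>\<mu> = 0 \<or> _\<close>, of \<alpha>] assms by (simp add: L_def)
    also have "\<dots> \<le> \<bar>\<mu>\<bar> / (2 * \<bar>y\<bar>) * (2 * L)"
      using gam_diff_bounds[OF assms \<open>\<mu> = 0 \<or> _\<close>] assms
      by (intro mult_left_mono) (auto simp: L_def)
    also have "\<dots> = \<bar>\<mu> * L / y\<bar>"
      using assms \<open>y \<noteq> 0\<close> by (simp add: L_def abs_mult abs_div)
    finally show ?case
      by simp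
  qed
  moreover have "((\<lambda>y::real. \<bar>\<mu> * L / y\<bar>) \<longlongrightarrow> 0) at_infinity"
    by (intro tendsto_rabs_zero tendsto_divide_0[OF tendsto_const] filterlim_ident)
  ultimately have "((\<lambda>y. gam \<mu> \<beta> y - gam \<mu> \<alpha> y - L) \<longlongrightarrow> 0) at_infinity"
    by (rule Lim_null_comparison)
  then show ?thesis
    by (simp add: L_def LIM_zero_iff)
qed

lemma gdom_imp_contraction: "y \<in> gdom \<mu> \<Longrightarrow> \<mu> = 0 \<or> \<bar>\<mu>\<bar> < \<bar>y\<bar>"
  by (auto simp: gdom_def)

theorem lemma5p2:
  fixes \<mu> :: real
  shows
    \<comment> \<open>well-definedness\<close>
    "(\<forall>\<alpha>>0. \<forall>y\<in>gdom \<mu>. \<exists>!x. x = \<mu> * ln (cmod (Complex x y)) - ln \<alpha>)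
     \<and> (\<exists>G' :: real \<Rightarrow> real \<Rightarrow> real.
        \<comment> \<open>(i) continuously differentiable on the domain\<close>
        (\<forall>\<alpha>>0. (\<forall>y\<in>gdom \<mu>. (gam \<mu> \<alpha> has_real_derivative G' \<alpha> y) (at y within gdom \<mu>))
                 \<and> continuous_on (gdom \<mu>) (G' \<alpha>))
        \<comment> \<open>(iii) derivative bound and uniform decay\<close>
      \<and> (\<forall>\<alpha>>0. \<forall>y\<in>gdom \<mu>. y \<noteq> 0 \<longrightarrow> \<bar>G' \<alpha> y\<bar> \<le> 2 * \<bar>\<mu>\<bar> / \<bar>y\<bar>)
      \<and> (\<forall>\<epsilon>>0. \<exists>R. \<forall>\<alpha>>0. \<forall>y\<in>gdom \<mu>. \<bar>y\<bar> \<ge> R \<longrightarrow> \<bar>G' \<alpha> y\<bar> < \<epsilon>))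
     \<comment> \<open>(ii) behaviour as |y| tends to infinity\<close>
     \<and> (\<forall>\<alpha>>0. (\<mu> > 0 \<longrightarrow> filterlim (gam \<mu> \<alpha>) at_top at_infinity)
              \<and> (\<mu> < 0 \<longrightarrow> filterlim (gam \<mu> \<alpha>) at_bot at_infinity)
              \<and> (\<mu> = 0 \<longrightarrow> (\<forall>y\<in>gdom \<mu>. gam \<mu> \<alpha> y = - ln \<alpha>)))
     \<comment> \<open>(iv) comparison for alpha > beta > 0\<close>
     \<and> (\<forall>\<alpha> \<beta>. \<alpha> > \<beta> \<and> \<beta> > 0 \<longrightarrow>
          (\<forall>y\<in>gdom \<mu>. 2/3 * ln (\<alpha>/\<beta>) \<le> gam \<mu> \<beta> y - gam \<mu> \<alpha> y
                        \<and> gam \<mu> \<beta> y - gam \<mu> \<alpha> y \<le> 2 * ln (\<alpha>/\<beta>))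
          \<and> ((\<lambda>y. gam \<mu> \<beta> y - gam \<mu> \<alpha> y) \<longlongrightarrow> ln (\<alpha>/\<beta>)) at_infinity)"
proof (intro conjI allI impI ballI exI[of _ "gam_deriv \<mu>"])
  fix \<alpha> y :: real
  assume "y \<in> gdom \<mu>"
  then have y: "\<mu> = 0 \<or> \<bar>\<mu>\<bar> < \<bar>y\<bar>"
    by (rule gdom_imp_contraction)
  show "\<exists>!x. x = \<mu> * ln (cmod (Complex x y)) - ln \<alpha>"
    using y by (rule ex1_gam_equation)
  show "(gam \<mu> \<alpha> has_real_derivative gam_deriv \<mu> \<alpha> y) (at y within gdom \<mu>)"
    using y by (rule has_field_derivative_at_within[OF gam_has_real_derivative])
  show "\<mu> = 0 \<Longrightarrow> gam \<mu> \<alpha> y = - ln \<alpha>"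
    by (simp add: gam_zero)
  show "y \<noteq> 0 \<Longrightarrow> \<bar>gam_deriv \<mu> \<alpha> y\<bar> \<le> 2 * \<bar>\<mu>\<bar> / \<bar>y\<bar>"
    using y by (intro abs_gam_deriv_le) auto
next
  show "continuous_on (gdom \<mu>) (gam_deriv \<mu> \<alpha>)" for \<alpha>
    by (intro continuous_at_imp_continuous_on ballI isCont_gam_deriv gdom_imp_contraction)
  show "\<exists>R. \<forall>\<alpha>>0. \<forall>y\<in>gdom \<mu>. R \<le> \<bar>y\<bar> \<longrightarrow> \<bar>gam_deriv \<mu> \<alpha> y\<bar> < \<epsilon>" if "0 < \<epsilon>" for \<epsilon>
    using gam_deriv_uniformly_small[OF that, of \<mu>] by blast
next
  show "filterlim (gam \<mu> \<alpha>) at_top at_infinity" if "0 < \<mu>" for \<alpha>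
    using that by (rule gam_tendsto_at_top)
  show "filterlim (gam \<mu> \<alpha>) at_bot at_infinity" if "\<mu> < 0" for \<alpha>
    using that by (rule gam_tendsto_at_bot)
next
  fix \<alpha> \<beta> y :: real
  assume ab: "\<beta> < \<alpha> \<and> 0 < \<beta>"
  then show "((\<lambda>y. gam \<mu> \<beta> y - gam \<mu> \<alpha> y) \<longlongrightarrow> ln (\<alpha> / \<beta>)) at_infinity"
    by (intro gam_diff_tendsto) auto
  assume "y \<in> gdom \<mu>"
  with ab show "2 / 3 * ln (\<alpha> / \<beta>) \<le> gam \<mu> \<beta> y - gam \<mu> \<alpha> y"
    and "gam \<mu> \<beta> y - gam \<mu> \<alpha> y \<le> 2 * ln (\<alpha> / \<beta>)"
    using gam_diff_bounds gdom_imp_contraction by blast+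
qed

end
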